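(* Let $C$ be a small 2-category in which every 2-cell is invertible, let $n\ge 2$ and $1\le k\le n-1$. Then the square with maps $N^{k-1}_nC\to N^k_nC$ (restriction), $N^{k-1}_nC\to C_2$ ($u\mapsto u_{n,k,k-1}$), $\phi^k_n\colon N^k_nC\to C_1$, $\phi^k_n(u)=u_{n,k}\circ u_{k,k-1}$, and the target map $t\colon C_2\to C_1$ is a set-theoretic pullback; that is, the induced map $N^{k-1}_nC\to N^k_nC\times_{C_1}C_2$ is a bijection.
   Context: The nerve $NC$ of a 2-category $C$ is the simplicial set whose $n$-simplices are normal lax functors $[n]\dashrightarrow C$ (where $[n]=\{0<\dots<n\}$ is viewed as a 2-category with only identity 2-cells), with simplicial operators given by precomposition. Concretely an $n$-simplex $u$ is given by objects $u_i$, arrows $u_{j,i}\colon u_i\to u_j$ for $i<j$ (with $u_{i,i}=\mathrm{id}$), and 2-cells $u_{l,j,i}\colon u_{l,i}\Rightarrow u_{l,j}\circ u_{j,i}$ for $i<j<l$ (identities when two indices coincide), such that for each $i<j<k<l$: $(u_{l,k}\circ u_{k,j,i})\bullet u_{l,k,i}=(u_{l,k,j}\circ u_{j,i})\bullet u_{l,j,i}$. Simplices of $\Delta^n$ are order-preserving maps $a\colon[m]\to[n]$. For $0\le k\le n-1$ let $F_k\Delta^n\subset\Delta^n$ be the simplicial subset of those $a\colon[m]\to[n]$ with $a(m)<n$ or $a(0)\ge k$ (so $F_0\Delta^n=\Delta^n$; it is the union of the face $d_n\Delta^n\cong\Delta^{n-1}$ with the face spanned by vertices $k,\dots,n$), and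 let $N^k_nC$ be the set of simplicial maps $F_k\Delta^n\to NC$; thus $N^0_nC=NC_n$ and restriction gives maps $N^{k-1}_nC\to N^k_nC$. For $u\in N^k_nC$ we use the notation $u_i,u_{j,i},u_{l,j,i}$ for the images of the vertices, edges and triangles contained in $F_k\Delta^n$. $C_1$, $C_2$ denote the sets of arrows and 2-cells, and $t$ the target of 2-cells. *)

theory Defs
  imports Main
begin

text \<open>A small 2-category: objects C_0, arrows C_1, 2-cells C_2 (as sets), with
  domain/codomain of arrows, source/target of 2-cells (a 2-cell alpha goes
  from src alpha to tgt alpha), identities, composition of arrows
  (comp g f = g o f), vertical composition (vcomp b a = b \<bullet> a) and
  horizontal composition (hcomp b a = b o a).\<close>

record ('o, 'a, 'c) twocat =
  Ob   :: "'o set"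
  Ar   :: "'a set"
  Ce   :: "'c set"
  dom1 :: "'a \<Rightarrow> 'o"
  cod1 :: "'a \<Rightarrow> 'o"
  id1  :: "'o \<Rightarrow> 'a"
  comp :: "'a \<Rightarrow> 'a \<Rightarrow> 'a"
  src  :: "'c \<Rightarrow> 'a"
  tgt  :: "'c \<Rightarrow> 'a"
  id2  :: "'a \<Rightarrow> 'c"
  vcomp :: "'c \<Rightarrow> 'c \<Rightarrow> 'c"
  hcomp :: "'c \<Rightarrow> 'c \<Rightarrow> 'c"

definition two_category :: "('o, 'a, 'c, 'z) twocat_scheme \<Rightarrow> bool" where
  "two_category C \<longleftrightarrow>
    \<comment> \<open>underlying category of objects and arrows\<close>
    (\<forall>f\<in>Ar C. dom1 C f \<in> Ob C \<and> cod1 C f \<in> Ob C) \<and>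
    (\<forall>x\<in>Ob C. id1 C x \<in> Ar C \<and> dom1 C (id1 C x) = x \<and> cod1 C (id1 C x) = x) \<and>
    (\<forall>f\<in>Ar C. \<forall>g\<in>Ar C. dom1 C g = cod1 C f \<longrightarrow>
        comp C g f \<in> Ar C \<and> dom1 C (comp C g f) = dom1 C f \<and> cod1 C (comp C g f) = cod1 C g) \<and>
    (\<forall>f\<in>Ar C. comp C (id1 C (cod1 C f)) f = f \<and> comp C f (id1 C (dom1 C f)) = f) \<and>
    (\<forall>f\<in>Ar C. \<forall>g\<in>Ar C. \<forall>h\<in>Ar C. dom1 C g = cod1 C f \<and> dom1 C h = cod1 C g \<longrightarrow>
        comp C h (comp C g f) = comp C (comp C h g) f) \<and>
    \<comment> \<open>2-cells go between parallel arrows\<close>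
    (\<forall>a\<in>Ce C. src C a \<in> Ar C \<and> tgt C a \<in> Ar C \<and>
        dom1 C (src C a) = dom1 C (tgt C a) \<and> cod1 C (src C a) = cod1 C (tgt C a)) \<and>
    \<comment> \<open>vertical composition: a category structure on each hom\<close>
    (\<forall>f\<in>Ar C. id2 C f \<in> Ce C \<and> src C (id2 C f) = f \<and> tgt C (id2 C f) = f) \<and>
    (\<forall>a\<in>Ce C. \<forall>b\<in>Ce C. src C b = tgt C a \<longrightarrow>
        vcomp C b a \<in> Ce C \<and> src C (vcomp C b a) = src C a \<and> tgt C (vcomp C b a) = tgt C b) \<and>
    (\<forall>a\<in>Ce C. vcomp C (id2 C (tgt C a)) a = a \<and> vcomp C a (id2 C (src C a)) = a) \<and>
    (\<forall>a\<in>Ce C. \<forall>b\<in>Ce C. \<forall>c\<in>Ce C. src C b = tgt C a \<and> src C c = tgt C b \<longrightarrow>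
        vcomp C c (vcomp C b a) = vcomp C (vcomp C c b) a) \<and>
    \<comment> \<open>horizontal composition\<close>
    (\<forall>a\<in>Ce C. \<forall>b\<in>Ce C. dom1 C (src C b) = cod1 C (src C a) \<longrightarrow>
        hcomp C b a \<in> Ce C \<and> src C (hcomp C b a) = comp C (src C b) (src C a) \<and>
        tgt C (hcomp C b a) = comp C (tgt C b) (tgt C a)) \<and>
    (\<forall>a\<in>Ce C. hcomp C (id2 C (id1 C (cod1 C (src C a)))) a = a \<and>
               hcomp C a (id2 C (id1 C (dom1 C (src C a)))) = a) \<and>
    (\<forall>a\<in>Ce C. \<forall>b\<in>Ce C. \<forall>c\<in>Ce C.
        dom1 C (src C b) = cod1 C (src C a) \<and> dom1 C (src C c) = cod1 C (src C b) \<longrightarrow>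
        hcomp C c (hcomp C b a) = hcomp C (hcomp C c b) a) \<and>
    (\<forall>f\<in>Ar C. \<forall>g\<in>Ar C. dom1 C g = cod1 C f \<longrightarrow>
        hcomp C (id2 C g) (id2 C f) = id2 C (comp C g f)) \<and>
    \<comment> \<open>interchange law\<close>
    (\<forall>a\<in>Ce C. \<forall>b\<in>Ce C. \<forall>c\<in>Ce C. \<forall>d\<in>Ce C.
        src C b = tgt C a \<and> src C d = tgt C c \<and> dom1 C (src C c) = cod1 C (src C a) \<longrightarrow>
        hcomp C (vcomp C d c) (vcomp C b a) = vcomp C (hcomp C d b) (hcomp C c a))"

definition all_2cells_invertible :: "('o, 'a, 'c, 'z) twocat_scheme \<Rightarrow> bool" where
  "all_2cells_invertible C \<longleftrightarrow>
    (\<forall>a\<in>Ce C. \<exists>b\<in>Ce C. src C b = tgt C a \<and> tgt C b = src C a \<and>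
        vcomp C b a = id2 C (src C a) \<and> vcomp C a b = id2 C (tgt C a))"

text \<open>An m-simplex of NC (a normal lax functor [m] --> C) is represented by the
  triple (u_i, u_{j,i}, u_{l,j,i}), with u_{j,i} given for i <= j <= m and
  u_{l,j,i} for i <= j <= l <= m; all other entries are undefined, so that
  equality of simplices is equality of the data.\<close>

type_synonym ('o, 'a, 'c) simp = "(nat \<Rightarrow> 'o) \<times> (nat \<Rightarrow> nat \<Rightarrow> 'a) \<times> (nat \<Rightarrow> nat \<Rightarrow> nat \<Rightarrow> 'c)"

definition sob :: "('o, 'a, 'c) simp \<Rightarrow> nat \<Rightarrow> 'o" where
  "sob u = fst u"
definition sar :: "('o, 'a, 'c) simp \<Rightarrow> nat \<Rightarrow> nat \<Rightarrow> 'a" where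
  "sar u = fst (snd u)"
definition sce :: "('o, 'a, 'c) simp \<Rightarrow> nat \<Rightarrow> nat \<Rightarrow> nat \<Rightarrow> 'c" where
  "sce u = snd (snd u)"

definition nerve_simplex :: "('o, 'a, 'c, 'z) twocat_scheme \<Rightarrow> nat \<Rightarrow> ('o, 'a, 'c) simp \<Rightarrow> bool" where
  "nerve_simplex C m u \<longleftrightarrow>
    (\<forall>i. i \<le> m \<longrightarrow> sob u i \<in> Ob C) \<and>
    (\<forall>i. \<not> i \<le> m \<longrightarrow> sob u i = undefined) \<and>
    (\<forall>i j. i \<le> j \<and> j \<le> m \<longrightarrow> sar u j i \<in> Ar C \<and>
        dom1 C (sar u j i) = sob u i \<and> cod1 C (sar u j i) = sob u j) \<and>
    (\<forall>i. i \<le> m \<longrightarrow> sar u i i = id1 C (sob u i)) \<and>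
    (\<forall>i j. \<not> (i \<le> j \<and> j \<le> m) \<longrightarrow> sar u j i = undefined) \<and>
    (\<forall>i j l. i \<le> j \<and> j \<le> l \<and> l \<le> m \<longrightarrow> sce u l j i \<in> Ce C \<and>
        src C (sce u l j i) = sar u l i \<and>
        tgt C (sce u l j i) = comp C (sar u l j) (sar u j i)) \<and>
    (\<forall>i j l. i \<le> j \<and> j \<le> l \<and> l \<le> m \<and> (i = j \<or> j = l) \<longrightarrow>
        sce u l j i = id2 C (sar u l i)) \<and>
    (\<forall>i j l. \<not> (i \<le> j \<and> j \<le> l \<and> l \<le> m) \<longrightarrow> sce u l j i = undefined) \<and>
    (\<forall>i j k l. i < j \<and> j < k \<and> k < l \<and> l \<le> m \<longrightarrow>
        vcomp C (hcomp C (id2 C (sar u l k)) (sce u k j i)) (sce u l k i) =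
        vcomp C (hcomp C (sce u l k j) (id2 C (sar u j i))) (sce u l j i))"

definition ord_map :: "nat \<Rightarrow> nat \<Rightarrow> (nat \<Rightarrow> nat) \<Rightarrow> bool" where
  "ord_map m' m \<theta> \<longleftrightarrow> (\<forall>i. i \<le> m' \<longrightarrow> \<theta> i \<le> m) \<and> (\<forall>i j. i \<le> j \<and> j \<le> m' \<longrightarrow> \<theta> i \<le> \<theta> j)"

definition simp_act :: "('o, 'a, 'c) simp \<Rightarrow> nat \<Rightarrow> (nat \<Rightarrow> nat) \<Rightarrow> ('o, 'a, 'c) simp" where
  "simp_act u m' \<theta> =
    ((\<lambda>i. if i \<le> m' then sob u (\<theta> i) else undefined),
     (\<lambda>j i. if i \<le> j \<and> j \<le> m' then sar u (\<theta> j) (\<theta> i) else undefined),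
     (\<lambda>l j i. if i \<le> j \<and> j \<le> l \<and> l \<le> m' then sce u (\<theta> l) (\<theta> j) (\<theta> i) else undefined))"

text \<open>An m-simplex of Delta^n is an order-preserving map a : [m] --> [n],
  represented as (m, a) with a i = 0 for i > m (canonical representative).\<close>

definition delta_simplex :: "nat \<Rightarrow> nat \<times> (nat \<Rightarrow> nat) \<Rightarrow> bool" where
  "delta_simplex n s \<longleftrightarrow> ord_map (fst s) n (snd s) \<and> (\<forall>i. fst s < i \<longrightarrow> snd s i = 0)"

definition norm_map :: "nat \<Rightarrow> (nat \<Rightarrow> nat) \<Rightarrow> nat \<Rightarrow> nat" where
  "norm_map m a = (\<lambda>i. if i \<le> m then a i else 0)"

definition in_F :: "nat \<Rightarrow> nat \<Rightarrow> nat \<times> (nat \<Rightarrow> nat) \<Rightarrow> bool" where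
  "in_F n k s \<longleftrightarrow> delta_simplex n s \<and> (snd s (fst s) < n \<or> k \<le> snd s 0)"

text \<open>N^k_n C: simplicial maps F_k Delta^n --> NC, represented as functions on
  the simplices of F_k Delta^n (undefined elsewhere).\<close>

definition NK :: "('o, 'a, 'c, 'z) twocat_scheme \<Rightarrow> nat \<Rightarrow> nat \<Rightarrow>
    (nat \<times> (nat \<Rightarrow> nat) \<Rightarrow> ('o, 'a, 'c) simp) set" where
  "NK C n k = {f.
     (\<forall>s. in_F n k s \<longrightarrow> nerve_simplex C (fst s) (f s)) \<and>
     (\<forall>s. \<not> in_F n k s \<longrightarrow> f s = undefined) \<and>
     (\<forall>m a m' \<theta>. in_F n k (m, a) \<and> ord_map m' m \<theta> \<longrightarrow>
         f (m', norm_map m' (a \<circ> \<theta>)) = simp_act (f (m, a)) m' \<theta>)}"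

definition restr :: "nat \<Rightarrow> nat \<Rightarrow> (nat \<times> (nat \<Rightarrow> nat) \<Rightarrow> ('o, 'a, 'c) simp) \<Rightarrow>
    (nat \<times> (nat \<Rightarrow> nat) \<Rightarrow> ('o, 'a, 'c) simp)" where
  "restr n k f = (\<lambda>s. if in_F n k s then f s else undefined)"

definition edge :: "nat \<Rightarrow> nat \<Rightarrow> nat \<times> (nat \<Rightarrow> nat)" where
  "edge i j = (1, \<lambda>x. if x = 0 then i else if x = 1 then j else 0)"

definition tri :: "nat \<Rightarrow> nat \<Rightarrow> nat \<Rightarrow> nat \<times> (nat \<Rightarrow> nat)" where
  "tri i j l = (2, \<lambda>x. if x = 0 then i else if x = 1 then j else if x = 2 then l else 0)"

definition u_ar :: "(nat \<times> (nat \<Rightarrow> nat) \<Rightarrow> ('o, 'a, 'c) simp) \<Rightarrow> nat \<Rightarrow> nat \<Rightarrow> 'a" where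
  "u_ar u j i = sar (u (edge i j)) 1 0"

definition u_ce :: "(nat \<times> (nat \<Rightarrow> nat) \<Rightarrow> ('o, 'a, 'c) simp) \<Rightarrow> nat \<Rightarrow> nat \<Rightarrow> nat \<Rightarrow> 'c" where
  "u_ce u l j i = sce (u (tri i j l)) 2 1 0"

definition phi :: "('o, 'a, 'c, 'z) twocat_scheme \<Rightarrow> nat \<Rightarrow> nat \<Rightarrow>
    (nat \<times> (nat \<Rightarrow> nat) \<Rightarrow> ('o, 'a, 'c) simp) \<Rightarrow> 'a" where
  "phi C n k u = comp C (u_ar u n k) (u_ar u k (k - 1))"

end

theory Submission
  imports Defs
begin

text \<open>A simplex of \<open>NC\<close>, and hence a map \<open>F\<^sub>k\<Delta>\<^sup>n \<rightarrow> NC\<close>, is determined by the cells it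
  assigns to vertices, edges and triangles, subject to normality and to the cocycle condition
  on every 3-simplex. Passing from \<open>F\<^sub>k\<Delta>\<^sup>n\<close> to \<open>F\<^sub>k\<^sub>-\<^sub>1\<Delta>\<^sup>n\<close> adds only the edge \<open>(k-1, n)\<close>
  and the triangles \<open>(k-1, q, n)\<close>, \<open>k \<le> q < n\<close>. Given \<open>v\<close> and \<open>\<alpha>\<close> with
  \<open>t \<alpha> = v\<^sub>n\<^sub>,\<^sub>k \<circ> v\<^sub>k\<^sub>,\<^sub>k\<^sub>-\<^sub>1\<close>, an extension \<open>u\<close> must have \<open>u\<^sub>n\<^sub>,\<^sub>k\<^sub>,\<^sub>k\<^sub>-\<^sub>1 = \<alpha>\<close> and
  \<open>u\<^sub>n\<^sub>,\<^sub>k\<^sub>-\<^sub>1 = s \<alpha>\<close>, and for \<open>k < q < n\<close> the cocycle condition on \<open>(k-1, k, q, n)\<close> expresses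
  \<open>(v\<^sub>n\<^sub>,\<^sub>q \<circ> v\<^sub>q\<^sub>,\<^sub>k\<^sub>,\<^sub>k\<^sub>-\<^sub>1) \<bullet> u\<^sub>n\<^sub>,\<^sub>q\<^sub>,\<^sub>k\<^sub>-\<^sub>1\<close> through known cells. As 2-cells are invertible
  this determines \<open>u\<^sub>n\<^sub>,\<^sub>q\<^sub>,\<^sub>k\<^sub>-\<^sub>1\<close> uniquely, and the remaining new cocycle conditions, on
  \<open>(k-1, q, r, n)\<close>, follow from those of \<open>v\<close> after cancelling an invertible whiskering.\<close>

section \<open>Strict 2-categories\<close>

locale two_cat =
  fixes C :: "('o, 'a, 'c, 'z) twocat_scheme"
  assumes two_category: "two_category C"
begin

abbreviation "d1 \<equiv> dom1 C"
abbreviation "c1 \<equiv> cod1 C"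
abbreviation "i1 \<equiv> id1 C"
abbreviation "cp \<equiv> comp C"
abbreviation "sr \<equiv> src C"
abbreviation "tg \<equiv> tgt C"
abbreviation "i2 \<equiv> id2 C"
abbreviation "vc \<equiv> vcomp C"
abbreviation "hc \<equiv> hcomp C"

lemma dom1_in_Ob [simp]: "f \<in> Ar C \<Longrightarrow> d1 f \<in> Ob C"
  and cod1_in_Ob [simp]: "f \<in> Ar C \<Longrightarrow> c1 f \<in> Ob C"
  and id1_in_Ar [simp]: "x \<in> Ob C \<Longrightarrow> i1 x \<in> Ar C"
  and dom1_id1 [simp]: "x \<in> Ob C \<Longrightarrow> d1 (i1 x) = x"
  and cod1_id1 [simp]: "x \<in> Ob C \<Longrightarrow> c1 (i1 x) = x"
  and comp_in_Ar [simp]: "f \<in> Ar C \<Longrightarrow> g \<in> Ar C \<Longrightarrow> d1 g = c1 f \<Longrightarrow> cp g f \<in> Ar C"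
  and dom1_comp [simp]: "f \<in> Ar C \<Longrightarrow> g \<in> Ar C \<Longrightarrow> d1 g = c1 f \<Longrightarrow> d1 (cp g f) = d1 f"
  and cod1_comp [simp]: "f \<in> Ar C \<Longrightarrow> g \<in> Ar C \<Longrightarrow> d1 g = c1 f \<Longrightarrow> c1 (cp g f) = c1 g"
  and comp_id1_left [simp]: "f \<in> Ar C \<Longrightarrow> x = c1 f \<Longrightarrow> cp (i1 x) f = f"
  and comp_id1_right [simp]: "f \<in> Ar C \<Longrightarrow> x = d1 f \<Longrightarrow> cp f (i1 x) = f"
  and comp_assoc: "f \<in> Ar C \<Longrightarrow> g \<in> Ar C \<Longrightarrow> h \<in> Ar C \<Longrightarrow> d1 g = c1 f \<Longrightarrow> d1 h = c1 g \<Longrightarrow>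
    cp h (cp g f) = cp (cp h g) f"
  using two_category unfolding two_category_def by (elim conjE; meson)+

lemma src_in_Ar [simp]: "a \<in> Ce C \<Longrightarrow> sr a \<in> Ar C"
  and tgt_in_Ar [simp]: "a \<in> Ce C \<Longrightarrow> tg a \<in> Ar C"
  and dom1_tgt [simp]: "a \<in> Ce C \<Longrightarrow> d1 (tg a) = d1 (sr a)"
  and cod1_tgt [simp]: "a \<in> Ce C \<Longrightarrow> c1 (tg a) = c1 (sr a)"
  using two_category unfolding two_category_def by (elim conjE; force)+

lemma id2_in_Ce [simp]: "f \<in> Ar C \<Longrightarrow> i2 f \<in> Ce C"
  and src_id2 [simp]: "f \<in> Ar C \<Longrightarrow> sr (i2 f) = f"
  and tgt_id2 [simp]: "f \<in> Ar C \<Longrightarrow> tg (i2 f) = f"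
  and vcomp_in_Ce [simp]: "a \<in> Ce C \<Longrightarrow> b \<in> Ce C \<Longrightarrow> sr b = tg a \<Longrightarrow> vc b a \<in> Ce C"
  and src_vcomp [simp]: "a \<in> Ce C \<Longrightarrow> b \<in> Ce C \<Longrightarrow> sr b = tg a \<Longrightarrow> sr (vc b a) = sr a"
  and tgt_vcomp [simp]: "a \<in> Ce C \<Longrightarrow> b \<in> Ce C \<Longrightarrow> sr b = tg a \<Longrightarrow> tg (vc b a) = tg b"
  and vcomp_id2_left [simp]: "a \<in> Ce C \<Longrightarrow> f = tg a \<Longrightarrow> vc (i2 f) a = a"
  and vcomp_id2_right [simp]: "a \<in> Ce C \<Longrightarrow> f = sr a \<Longrightarrow> vc a (i2 f) = a"
  and vcomp_assoc: "a \<in> Ce C \<Longrightarrow> b \<in> Ce C \<Longrightarrow> c \<in> Ce C \<Longrightarrow> sr b = tg a \<Longrightarrow> sr c = tg b \<Longrightarrow>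
    vc c (vc b a) = vc (vc c b) a"
  using two_category unfolding two_category_def by (elim conjE; meson)+

lemma hcomp_in_Ce [simp]: "a \<in> Ce C \<Longrightarrow> b \<in> Ce C \<Longrightarrow> d1 (sr b) = c1 (sr a) \<Longrightarrow> hc b a \<in> Ce C"
  and src_hcomp [simp]:
    "a \<in> Ce C \<Longrightarrow> b \<in> Ce C \<Longrightarrow> d1 (sr b) = c1 (sr a) \<Longrightarrow> sr (hc b a) = cp (sr b) (sr a)"
  and tgt_hcomp [simp]:
    "a \<in> Ce C \<Longrightarrow> b \<in> Ce C \<Longrightarrow> d1 (sr b) = c1 (sr a) \<Longrightarrow> tg (hc b a) = cp (tg b) (tg a)"
  and hcomp_id_left: "a \<in> Ce C \<Longrightarrow> x = c1 (sr a) \<Longrightarrow> hc (i2 (i1 x)) a = a"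
  and hcomp_id_right: "a \<in> Ce C \<Longrightarrow> x = d1 (sr a) \<Longrightarrow> hc a (i2 (i1 x)) = a"
  and hcomp_assoc: "a \<in> Ce C \<Longrightarrow> b \<in> Ce C \<Longrightarrow> c \<in> Ce C \<Longrightarrow>
    d1 (sr b) = c1 (sr a) \<Longrightarrow> d1 (sr c) = c1 (sr b) \<Longrightarrow> hc c (hc b a) = hc (hc c b) a"
  and hcomp_id2_id2 [simp]:
    "f \<in> Ar C \<Longrightarrow> g \<in> Ar C \<Longrightarrow> d1 g = c1 f \<Longrightarrow> hc (i2 g) (i2 f) = i2 (cp g f)"
  and interchange: "a \<in> Ce C \<Longrightarrow> b \<in> Ce C \<Longrightarrow> c \<in> Ce C \<Longrightarrow> d \<in> Ce C \<Longrightarrow>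
    sr b = tg a \<Longrightarrow> sr d = tg c \<Longrightarrow> d1 (sr c) = c1 (sr a) \<Longrightarrow>
    hc (vc d c) (vc b a) = vc (hc d b) (hc c a)"
  using two_category unfolding two_category_def by (elim conjE; meson)+


lemma whisker_left_vcomp:
  "a \<in> Ce C \<Longrightarrow> b \<in> Ce C \<Longrightarrow> sr b = tg a \<Longrightarrow> g \<in> Ar C \<Longrightarrow> d1 g = c1 (sr a) \<Longrightarrow>
   hc (i2 g) (vc b a) = vc (hc (i2 g) b) (hc (i2 g) a)"
  using interchange[of a b "i2 g" "i2 g"] by simp

lemma whisker_right_vcomp:
  "a \<in> Ce C \<Longrightarrow> b \<in> Ce C \<Longrightarrow> sr b = tg a \<Longrightarrow> f \<in> Ar C \<Longrightarrow> d1 (sr a) = c1 f \<Longrightarrow>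
   hc (vc b a) (i2 f) = vc (hc b (i2 f)) (hc a (i2 f))"
  using interchange[of "i2 f" "i2 f" a b] by simp

lemma whisker_exchange:
  assumes "a \<in> Ce C" "b \<in> Ce C" "d1 (sr b) = c1 (sr a)"
  shows "vc (hc (i2 (tg b)) a) (hc b (i2 (sr a))) = vc (hc b (i2 (tg a))) (hc (i2 (sr b)) a)"
proof -
  have "vc (hc (i2 (tg b)) a) (hc b (i2 (sr a))) = hc (vc (i2 (tg b)) b) (vc a (i2 (sr a)))"
    using assms by (intro interchange[symmetric]) auto
  also have "\<dots> = hc (vc b (i2 (sr b))) (vc (i2 (tg a)) a)"
    using assms by simp
  also have "\<dots> = vc (hc b (i2 (tg a))) (hc (i2 (sr b)) a)"
    using assms by (intro interchange) auto
  finally show ?thesis .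
qed

lemma whisker_left_whisker_left:
  "a \<in> Ce C \<Longrightarrow> g \<in> Ar C \<Longrightarrow> h \<in> Ar C \<Longrightarrow> d1 g = c1 (sr a) \<Longrightarrow> d1 h = c1 g \<Longrightarrow>
   hc (i2 h) (hc (i2 g) a) = hc (i2 (cp h g)) a"
  by (subst hcomp_assoc) auto

lemma whisker_right_whisker_right:
  "a \<in> Ce C \<Longrightarrow> f \<in> Ar C \<Longrightarrow> e \<in> Ar C \<Longrightarrow> d1 (sr a) = c1 f \<Longrightarrow> d1 f = c1 e \<Longrightarrow>
   hc (hc a (i2 f)) (i2 e) = hc a (i2 (cp f e))"
  by (subst hcomp_assoc[symmetric]) auto

lemma whisker_left_right:
  "a \<in> Ce C \<Longrightarrow> f \<in> Ar C \<Longrightarrow> g \<in> Ar C \<Longrightarrow> d1 (sr a) = c1 f \<Longrightarrow> d1 g = c1 (sr a) \<Longrightarrow>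
   hc (i2 g) (hc a (i2 f)) = hc (hc (i2 g) a) (i2 f)"
  by (subst hcomp_assoc) auto

end

locale groupoidal_two_cat = two_cat +
  assumes invertible: "all_2cells_invertible C"
begin

definition inv2 :: "'c \<Rightarrow> 'c" where
  "inv2 a = (SOME b. b \<in> Ce C \<and> sr b = tg a \<and> tg b = sr a \<and> vc b a = i2 (sr a) \<and> vc a b = i2 (tg a))"

lemma inv2:
  assumes "a \<in> Ce C"
  shows "inv2 a \<in> Ce C \<and> sr (inv2 a) = tg a \<and> tg (inv2 a) = sr a \<and>
    vc (inv2 a) a = i2 (sr a) \<and> vc a (inv2 a) = i2 (tg a)"
proof -
  obtain b where "b \<in> Ce C \<and> sr b = tg a \<and> tg b = sr a \<and> vc b a = i2 (sr a) \<and> vc a b = i2 (tg a)"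
    using invertible assms unfolding all_2cells_invertible_def by blast
  then show ?thesis unfolding inv2_def by (rule someI)
qed

lemma inv2_in_Ce [simp]: "a \<in> Ce C \<Longrightarrow> inv2 a \<in> Ce C"
  and src_inv2 [simp]: "a \<in> Ce C \<Longrightarrow> sr (inv2 a) = tg a"
  and tgt_inv2 [simp]: "a \<in> Ce C \<Longrightarrow> tg (inv2 a) = sr a"
  using inv2 by blast+

lemma vcomp_cancel_left:
  assumes "g \<in> Ce C" "x \<in> Ce C" "y \<in> Ce C" "tg x = sr g" "tg y = sr g" and eq: "vc g x = vc g y"
  shows "x = y"
proof -
  have "vc (inv2 g) (vc g z) = z" if "z \<in> Ce C" "tg z = sr g" for z
    using assms(1) that inv2[of g] by (simp add: vcomp_assoc)
  then show ?thesis using eq assms(2-5) by metis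
qed

lemma vcomp_inv2_cancel:
  assumes "g \<in> Ce C" "x \<in> Ce C" "tg x = tg g"
  shows "vc g (vc (inv2 g) x) = x"
  using assms inv2[of g] by (simp add: vcomp_assoc)

end

section \<open>Maps from \<open>F\<^sub>k\<Delta>\<^sup>n\<close> to the nerve\<close>

definition tri_map :: "nat \<Rightarrow> nat \<Rightarrow> nat \<Rightarrow> nat \<Rightarrow> nat" where
  "tri_map i j l = (\<lambda>x. if x = 0 then i else if x = 1 then j else l)"

definition tetra :: "nat \<Rightarrow> nat \<Rightarrow> nat \<Rightarrow> nat \<Rightarrow> nat \<times> (nat \<Rightarrow> nat)" where
  "tetra p q r s =
    (3, \<lambda>x. if x = 0 then p else if x = 1 then q else if x = 2 then r else if x = 3 then s else 0)"

text \<open>A simplex of \<open>\<Delta>\<^sup>n\<close> lies in \<open>F\<^sub>k\<Delta>\<^sup>n\<close> iff its longest edge does, so the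
  faces of \<open>F\<^sub>k\<Delta>\<^sup>n\<close> are governed by the following condition on pairs \<open>p \<le> s\<close>.\<close>

definition F_edge :: "nat \<Rightarrow> nat \<Rightarrow> nat \<Rightarrow> nat \<Rightarrow> bool" where
  "F_edge n k p s \<longleftrightarrow> p \<le> s \<and> s \<le> n \<and> (s < n \<or> k \<le> p)"

definition cocycle :: "('o, 'a, 'c, 'z) twocat_scheme \<Rightarrow> ('o, 'a, 'c) simp \<Rightarrow> nat \<Rightarrow> nat \<Rightarrow> nat \<Rightarrow> nat \<Rightarrow> bool" where
  "cocycle C G p q r s \<longleftrightarrow>
     vcomp C (hcomp C (id2 C (sar G s r)) (sce G r q p)) (sce G s r p) =
     vcomp C (hcomp C (sce G s r q) (id2 C (sar G q p))) (sce G s q p)"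

text \<open>The data \<open>(u\<^sub>i, u\<^sub>j\<^sub>,\<^sub>i, u\<^sub>l\<^sub>,\<^sub>j\<^sub>,\<^sub>i)\<close> of a normal lax functor, required only on the
  edges and triangles of \<open>F\<^sub>k\<Delta>\<^sup>n\<close>.\<close>

definition lax_data :: "('o, 'a, 'c, 'z) twocat_scheme \<Rightarrow> nat \<Rightarrow> nat \<Rightarrow> ('o, 'a, 'c) simp \<Rightarrow> bool" where
  "lax_data C n k G \<longleftrightarrow>
   (\<forall>p. p \<le> n \<longrightarrow> sob G p \<in> Ob C) \<and>
   (\<forall>p q. F_edge n k p q \<longrightarrow>
      sar G q p \<in> Ar C \<and> dom1 C (sar G q p) = sob G p \<and> cod1 C (sar G q p) = sob G q) \<and>
   (\<forall>p. p \<le> n \<longrightarrow> sar G p p = id1 C (sob G p)) \<and>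
   (\<forall>p q r. p \<le> q \<and> q \<le> r \<and> F_edge n k p r \<longrightarrow>
      sce G r q p \<in> Ce C \<and> src C (sce G r q p) = sar G r p \<and>
      tgt C (sce G r q p) = comp C (sar G r q) (sar G q p)) \<and>
   (\<forall>p q r. p \<le> q \<and> q \<le> r \<and> F_edge n k p r \<and> (p = q \<or> q = r) \<longrightarrow>
      sce G r q p = id2 C (sar G r p)) \<and>
   (\<forall>p q r s. p < q \<and> q < r \<and> r < s \<and> F_edge n k p s \<longrightarrow> cocycle C G p q r s)"

definition data_of :: "(nat \<times> (nat \<Rightarrow> nat) \<Rightarrow> ('o, 'a, 'c) simp) \<Rightarrow> ('o, 'a, 'c) simp" where
  "data_of u =
    ((\<lambda>p. sob (u (tri p p p)) 0), (\<lambda>q p. sar (u (tri p q q)) 1 0), (\<lambda>r q p. sce (u (tri p q r)) 2 1 0))"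

definition induced_map :: "nat \<Rightarrow> nat \<Rightarrow> ('o, 'a, 'c) simp \<Rightarrow> (nat \<times> (nat \<Rightarrow> nat) \<Rightarrow> ('o, 'a, 'c) simp)" where
  "induced_map n k G = (\<lambda>s. if in_F n k s then simp_act G (fst s) (snd s) else undefined)"

definition agree_on :: "nat \<Rightarrow> nat \<Rightarrow> ('o, 'a, 'c) simp \<Rightarrow> ('o, 'a, 'c) simp \<Rightarrow> bool" where
  "agree_on n k G G' \<longleftrightarrow>
     (\<forall>x. x \<le> n \<longrightarrow> sob G x = sob G' x) \<and>
     (\<forall>x y. F_edge n k x y \<longrightarrow> sar G y x = sar G' y x) \<and>
     (\<forall>x y z. x \<le> y \<and> y \<le> z \<and> F_edge n k x z \<longrightarrow> sce G z y x = sce G' z y x)"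

lemma sob_data_of: "sob (data_of u) p = sob (u (tri p p p)) 0"
  and sar_data_of: "sar (data_of u) q p = sar (u (tri p q q)) 1 0"
  and sce_data_of: "sce (data_of u) r q p = sce (u (tri p q r)) 2 1 0"
  by (simp_all add: data_of_def sob_def sar_def sce_def)

lemma sob_simp_act: "sob (simp_act v m \<theta>) = (\<lambda>i. if i \<le> m then sob v (\<theta> i) else undefined)"
  and sar_simp_act:
    "sar (simp_act v m \<theta>) = (\<lambda>j i. if i \<le> j \<and> j \<le> m then sar v (\<theta> j) (\<theta> i) else undefined)"
  and sce_simp_act: "sce (simp_act v m \<theta>) =
    (\<lambda>l j i. if i \<le> j \<and> j \<le> l \<and> l \<le> m then sce v (\<theta> l) (\<theta> j) (\<theta> i) else undefined)"
  by (simp_all add: simp_act_def sob_def sar_def sce_def)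

lemma simp_eqI: "sob x = sob y \<Longrightarrow> sar x = sar y \<Longrightarrow> sce x = sce y \<Longrightarrow> x = y"
  by (cases x; cases y) (simp add: sob_def sar_def sce_def)

lemma in_F_mono: "in_F n k (m, a) \<Longrightarrow> i \<le> j \<Longrightarrow> j \<le> m \<Longrightarrow> a i \<le> a j"
  and in_F_bound: "in_F n k (m, a) \<Longrightarrow> i \<le> m \<Longrightarrow> a i \<le> n"
  by (simp_all add: in_F_def delta_simplex_def ord_map_def)

lemma in_F_F_edge:
  assumes F: "in_F n k (m, a)" and "i \<le> l" "l \<le> m"
  shows "F_edge n k (a i) (a l)"
proof -
  have "a l \<le> a m" "a 0 \<le> a i" "a i \<le> a l" "a l \<le> n"
    using assms in_F_mono in_F_bound by auto
  moreover have "a m < n \<or> k \<le> a 0" using F by (simp add: in_F_def)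
  ultimately show ?thesis unfolding F_edge_def by auto
qed

lemma F_edge_subedge: "F_edge n k p s \<Longrightarrow> p \<le> p' \<Longrightarrow> p' \<le> s' \<Longrightarrow> s' \<le> s \<Longrightarrow> F_edge n k p' s'"
  unfolding F_edge_def by auto

lemma F_edge_anti: "k' \<le> k \<Longrightarrow> F_edge n k x y \<Longrightarrow> F_edge n k' x y"
  by (auto simp: F_edge_def)

lemma in_F_anti: "k' \<le> k \<Longrightarrow> in_F n k s \<Longrightarrow> in_F n k' s"
  by (auto simp: in_F_def)

lemma in_F_edge: "F_edge n k p q \<Longrightarrow> in_F n k (edge p q)"
  and in_F_tri: "p \<le> q \<Longrightarrow> q \<le> r \<Longrightarrow> F_edge n k p r \<Longrightarrow> in_F n k (tri p q r)"
  and in_F_tetra: "p \<le> q \<Longrightarrow> q \<le> r \<Longrightarrow> r \<le> s \<Longrightarrow> F_edge n k p s \<Longrightarrow> in_F n k (tetra p q r s)"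
  by (auto simp: in_F_def edge_def tri_def tetra_def delta_simplex_def ord_map_def F_edge_def)

lemma in_F_comp:
  assumes F: "in_F n k (m, a)" and \<theta>: "ord_map m' m \<theta>"
  shows "in_F n k (m', norm_map m' (a \<circ> \<theta>))"
proof -
  have \<theta>_bound: "\<theta> i \<le> m" if "i \<le> m'" for i using \<theta> that by (simp add: ord_map_def)
  have \<theta>_mono: "\<theta> i \<le> \<theta> j" if "i \<le> j" "j \<le> m'" for i j using \<theta> that by (simp add: ord_map_def)
  have "a (\<theta> m') \<le> a m" "a 0 \<le> a (\<theta> 0)"
    using \<theta>_bound[of m'] \<theta>_bound[of 0] in_F_mono[OF F] by simp_all
  moreover have "a m < n \<or> k \<le> a 0" using F by (simp add: in_F_def)
  moreover have "ord_map m' n (norm_map m' (a \<circ> \<theta>))"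
    using \<theta>_bound \<theta>_mono in_F_mono[OF F] in_F_bound[OF F] by (auto simp: ord_map_def norm_map_def)
  ultimately show ?thesis
    by (auto simp: in_F_def delta_simplex_def norm_map_def)
qed

lemma simp_act_comp:
  assumes "ord_map m' m \<theta>"
  shows "simp_act G m' (norm_map m' (a \<circ> \<theta>)) = simp_act (simp_act G m a) m' \<theta>"
proof -
  have \<theta>_bound: "\<theta> i \<le> m" if "i \<le> m'" for i using assms that by (simp add: ord_map_def)
  have \<theta>_mono: "\<theta> i \<le> \<theta> j" if "i \<le> j" "j \<le> m'" for i j using assms that by (simp add: ord_map_def)
  show ?thesis
    by (rule simp_eqI)
      (auto simp: sob_simp_act sar_simp_act sce_simp_act norm_map_def fun_eq_iff \<theta>_bound \<theta>_mono
        dest: \<theta>_mono)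
qed

lemma NK_compat: "u \<in> NK C n k \<Longrightarrow> in_F n k (m, a) \<Longrightarrow> ord_map m' m \<theta> \<Longrightarrow>
    u (m', norm_map m' (a \<circ> \<theta>)) = simp_act (u (m, a)) m' \<theta>"
  and NK_nerve_simplex: "u \<in> NK C n k \<Longrightarrow> in_F n k s \<Longrightarrow> nerve_simplex C (fst s) (u s)"
  and NK_undefined: "u \<in> NK C n k \<Longrightarrow> \<not> in_F n k s \<Longrightarrow> u s = undefined"
  unfolding NK_def by blast+

lemma NK_tri:
  assumes "u \<in> NK C n k" "in_F n k (m, a)" "i \<le> j" "j \<le> l" "l \<le> m"
  shows "u (tri (a i) (a j) (a l)) = simp_act (u (m, a)) 2 (tri_map i j l)"
proof -
  have "tri (a i) (a j) (a l) = (2, norm_map 2 (a \<circ> tri_map i j l))"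
    by (auto simp: tri_def norm_map_def tri_map_def fun_eq_iff)
  moreover have "ord_map 2 m (tri_map i j l)"
    using assms(3-5) by (auto simp: ord_map_def tri_map_def)
  ultimately show ?thesis using NK_compat assms(1,2) by metis
qed

text \<open>Every simplex of \<open>NC\<close> is the image of its triangles, so a map
  \<open>F\<^sub>k\<Delta>\<^sup>n \<rightarrow> NC\<close> is induced by the data it assigns to the triangles of \<open>\<Delta>\<^sup>n\<close>.\<close>

lemma NK_eq_simp_act_data_of:
  assumes u: "u \<in> NK C n k" and F: "in_F n k (m, a)"
  shows "u (m, a) = simp_act (data_of u) m a"
proof (rule simp_eqI; intro ext)
  have ns: "nerve_simplex C m (u (m, a))" using NK_nerve_simplex[OF u F] by simp
  show "sob (u (m, a)) i = sob (simp_act (data_of u) m a) i" for i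
    using NK_tri[OF u F, of i i i] ns
    by (cases "i \<le> m") (simp_all add: sob_simp_act sob_data_of tri_map_def nerve_simplex_def)
  show "sar (u (m, a)) j i = sar (simp_act (data_of u) m a) j i" for j i
    using NK_tri[OF u F, of i j j] ns
    by (cases "i \<le> j \<and> j \<le> m") (auto simp: sar_simp_act sar_data_of tri_map_def nerve_simplex_def)
  show "sce (u (m, a)) l j i = sce (simp_act (data_of u) m a) l j i" for l j i
    using NK_tri[OF u F, of i j l] ns
    by (cases "i \<le> j \<and> j \<le> l \<and> l \<le> m")
      (auto simp: sce_simp_act sce_data_of tri_map_def nerve_simplex_def)
qed

lemma NK_eq_induced_map:
  assumes "u \<in> NK C n k"
  shows "u = induced_map n k (data_of u)"
proof
  fix s
  show "u s = induced_map n k (data_of u) s"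
    using assms NK_eq_simp_act_data_of[OF assms, of "fst s" "snd s"] NK_undefined[OF assms, of s]
    by (auto simp: induced_map_def)
qed

lemma induced_map_in_NK:
  assumes "\<And>m a. in_F n k (m, a) \<Longrightarrow> nerve_simplex C m (simp_act G m a)"
  shows "induced_map n k G \<in> NK C n k"
  unfolding NK_def
proof (intro CollectI conjI allI impI)
  show "nerve_simplex C (fst s) (induced_map n k G s)" if "in_F n k s" for s
    using that assms[of "fst s" "snd s"] by (auto simp: induced_map_def)
  show "induced_map n k G s = undefined" if "\<not> in_F n k s" for s
    using that by (simp add: induced_map_def)
  show "induced_map n k G (m', norm_map m' (a \<circ> \<theta>)) = simp_act (induced_map n k G (m, a)) m' \<theta>"
    if "in_F n k (m, a) \<and> ord_map m' m \<theta>" for m a m' \<theta>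
    using that in_F_comp[of n k m a m' \<theta>] simp_act_comp[of m' m \<theta>] by (simp add: induced_map_def)
qed

lemma restr_induced_map: "k' \<le> k \<Longrightarrow> restr n k (induced_map n k' G) = induced_map n k G"
  by (auto simp: restr_def induced_map_def fun_eq_iff dest: in_F_anti)

lemma u_ar_induced_map: "F_edge n k x y \<Longrightarrow> u_ar (induced_map n k G) y x = sar G y x"
  using in_F_edge by (auto simp: u_ar_def induced_map_def sar_simp_act edge_def)

lemma induced_map_tri:
  assumes "in_F n k (tri x y z)"
  shows "sob (induced_map n k G (tri x y z)) 0 = sob G x"
    and "sar (induced_map n k G (tri x y z)) 2 0 = sar G z x"
    and "sce (induced_map n k G (tri x y z)) 2 1 0 = sce G z y x"
  using assms by (auto simp: induced_map_def sob_simp_act sar_simp_act sce_simp_act tri_def)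

lemma u_ce_induced_map: "in_F n k (tri x y z) \<Longrightarrow> u_ce (induced_map n k G) z y x = sce G z y x"
  unfolding u_ce_def by (rule induced_map_tri)

lemma induced_map_cong:
  assumes "agree_on n k G G'"
  shows "induced_map n k G = induced_map n k G'"
proof
  fix s
  show "induced_map n k G s = induced_map n k G' s"
  proof (cases s)
    case (Pair m a)
    show ?thesis
    proof (cases "in_F n k (m, a)")
      case F: True
      have "simp_act G m a = simp_act G' m a"
        using assms in_F_bound[OF F] in_F_F_edge[OF F] in_F_mono[OF F]
        by (intro simp_eqI) (auto simp: agree_on_def sob_simp_act sar_simp_act sce_simp_act fun_eq_iff)
      then show ?thesis using F Pair by (simp add: induced_map_def)
    qed (simp add: Pair induced_map_def)
  qed
qed

lemma agree_on_if_induced_map_eq: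
  assumes eq: "induced_map n k G = induced_map n k G'" and "k \<le> n"
  shows "agree_on n k G G'"
  unfolding agree_on_def
proof (intro conjI allI impI)
  fix x assume "x \<le> n"
  then have "in_F n k (tri x x x)" using assms(2) by (intro in_F_tri) (auto simp: F_edge_def)
  then show "sob G x = sob G' x" using induced_map_tri(1) eq by metis
next
  fix x y assume "F_edge n k x y"
  then have "in_F n k (tri x y y)" by (intro in_F_tri) (auto simp: F_edge_def)
  then show "sar G y x = sar G' y x" using induced_map_tri(2) eq by metis
next
  fix x y z assume "x \<le> y \<and> y \<le> z \<and> F_edge n k x z"
  then have "in_F n k (tri x y z)" by (intro in_F_tri) auto
  then show "sce G z y x = sce G' z y x" using induced_map_tri(3) eq by metis
qed

lemma lax_dataD:
  assumes "lax_data C n k G"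
  shows lax_data_Ob: "p \<le> n \<Longrightarrow> sob G p \<in> Ob C"
    and lax_data_Ar: "F_edge n k p q \<Longrightarrow>
      sar G q p \<in> Ar C \<and> dom1 C (sar G q p) = sob G p \<and> cod1 C (sar G q p) = sob G q"
    and lax_data_id1: "p \<le> n \<Longrightarrow> sar G p p = id1 C (sob G p)"
    and lax_data_Ce: "p \<le> q \<Longrightarrow> q \<le> r \<Longrightarrow> F_edge n k p r \<Longrightarrow>
      sce G r q p \<in> Ce C \<and> src C (sce G r q p) = sar G r p \<and>
      tgt C (sce G r q p) = comp C (sar G r q) (sar G q p)"
    and lax_data_normal: "p \<le> q \<Longrightarrow> q \<le> r \<Longrightarrow> F_edge n k p r \<Longrightarrow> p = q \<or> q = r \<Longrightarrow>
      sce G r q p = id2 C (sar G r p)"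
    and lax_data_cocycle_strict: "p < q \<Longrightarrow> q < r \<Longrightarrow> r < s \<Longrightarrow> F_edge n k p s \<Longrightarrow> cocycle C G p q r s"
  using assms unfolding lax_data_def by simp_all

lemma nerve_simplexD:
  assumes "nerve_simplex C m u"
  shows "i \<le> m \<Longrightarrow> sob u i \<in> Ob C"
    and "i \<le> j \<Longrightarrow> j \<le> m \<Longrightarrow>
      sar u j i \<in> Ar C \<and> dom1 C (sar u j i) = sob u i \<and> cod1 C (sar u j i) = sob u j"
    and "i \<le> m \<Longrightarrow> sar u i i = id1 C (sob u i)"
    and "i \<le> j \<Longrightarrow> j \<le> l \<Longrightarrow> l \<le> m \<Longrightarrow> sce u l j i \<in> Ce C \<and>
      src C (sce u l j i) = sar u l i \<and> tgt C (sce u l j i) = comp C (sar u l j) (sar u j i)"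
    and "i \<le> j \<Longrightarrow> j \<le> l \<Longrightarrow> l \<le> m \<Longrightarrow> i = j \<or> j = l \<Longrightarrow> sce u l j i = id2 C (sar u l i)"
    and "i < j \<Longrightarrow> j < k \<Longrightarrow> k < l \<Longrightarrow> l \<le> m \<Longrightarrow> cocycle C u i j k l"
  using assms unfolding nerve_simplex_def cocycle_def by simp_all

lemma nerve_simplex_simp_actD:
  assumes "nerve_simplex C m (simp_act G m a)"
  shows "i \<le> m \<Longrightarrow> sob G (a i) \<in> Ob C"
    and "i \<le> j \<Longrightarrow> j \<le> m \<Longrightarrow> sar G (a j) (a i) \<in> Ar C \<and>
      dom1 C (sar G (a j) (a i)) = sob G (a i) \<and> cod1 C (sar G (a j) (a i)) = sob G (a j)"
    and "i \<le> m \<Longrightarrow> sar G (a i) (a i) = id1 C (sob G (a i))"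
    and "i \<le> j \<Longrightarrow> j \<le> l \<Longrightarrow> l \<le> m \<Longrightarrow> sce G (a l) (a j) (a i) \<in> Ce C \<and>
      src C (sce G (a l) (a j) (a i)) = sar G (a l) (a i) \<and>
      tgt C (sce G (a l) (a j) (a i)) = comp C (sar G (a l) (a j)) (sar G (a j) (a i))"
    and "i \<le> j \<Longrightarrow> j \<le> l \<Longrightarrow> l \<le> m \<Longrightarrow> i = j \<or> j = l \<Longrightarrow>
      sce G (a l) (a j) (a i) = id2 C (sar G (a l) (a i))"
    and "i < j \<Longrightarrow> j < k \<Longrightarrow> k < l \<Longrightarrow> l \<le> m \<Longrightarrow> cocycle C G (a i) (a j) (a k) (a l)"
  using nerve_simplexD(1,3)[OF assms, of i] nerve_simplexD(2)[OF assms, of i j]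
    nerve_simplexD(4,5)[OF assms, of i j l] nerve_simplexD(6)[OF assms, of i j k l]
  by (simp_all add: sob_simp_act sar_simp_act sce_simp_act cocycle_def)

lemma NK_lax_data:
  assumes u: "u \<in> NK C n k" and "k \<le> n"
  shows "lax_data C n k (data_of u)"
proof -
  have tri: "nerve_simplex C 2 (simp_act (data_of u) 2 (snd (tri p q r)))"
    if "p \<le> q" "q \<le> r" "F_edge n k p r" for p q r
  proof -
    have F: "in_F n k (2, snd (tri p q r))" using in_F_tri[OF that] by (simp add: tri_def)
    show ?thesis using NK_nerve_simplex[OF u F] NK_eq_simp_act_data_of[OF u F] by simp
  qed
  have tetra: "nerve_simplex C 3 (simp_act (data_of u) 3 (snd (tetra p q r s)))"
    if "p \<le> q" "q \<le> r" "r \<le> s" "F_edge n k p s" for p q r s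
  proof -
    have F: "in_F n k (3, snd (tetra p q r s))" using in_F_tetra[OF that] by (simp add: tetra_def)
    show ?thesis using NK_nerve_simplex[OF u F] NK_eq_simp_act_data_of[OF u F] by simp
  qed
  have diag: "F_edge n k p p" if "p \<le> n" for p
    using that assms(2) by (auto simp: F_edge_def)
  show ?thesis
    unfolding lax_data_def
  proof (intro conjI; intro allI impI)
    fix p assume "p \<le> n"
    show "sob (data_of u) p \<in> Ob C"
      using nerve_simplex_simp_actD(1)[OF tri[OF order.refl order.refl diag], of p 0] \<open>p \<le> n\<close>
      by (simp add: tri_def)
  next
    fix p q assume pq: "F_edge n k p q"
    then show "sar (data_of u) q p \<in> Ar C \<and> dom1 C (sar (data_of u) q p) = sob (data_of u) p \<and>
        cod1 C (sar (data_of u) q p) = sob (data_of u) q"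
      using nerve_simplex_simp_actD(2)[OF tri[OF _ order.refl pq], of 0 1]
      by (simp add: tri_def F_edge_def)
  next
    fix p assume "p \<le> n"
    show "sar (data_of u) p p = id1 C (sob (data_of u) p)"
      using nerve_simplex_simp_actD(3)[OF tri[OF order.refl order.refl diag], of p 0] \<open>p \<le> n\<close>
      by (simp add: tri_def)
  next
    fix p q r assume "p \<le> q \<and> q \<le> r \<and> F_edge n k p r"
    then show "sce (data_of u) r q p \<in> Ce C \<and> src C (sce (data_of u) r q p) = sar (data_of u) r p \<and>
        tgt C (sce (data_of u) r q p) = comp C (sar (data_of u) r q) (sar (data_of u) q p)"
      using nerve_simplex_simp_actD(4)[OF tri, of p q r 0 1 2] by (simp add: tri_def)
  next
    fix p q r assume "p \<le> q \<and> q \<le> r \<and> F_edge n k p r \<and> (p = q \<or> q = r)"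
    then show "sce (data_of u) r q p = id2 C (sar (data_of u) r p)"
      using nerve_simplex_simp_actD(5)[OF tri, of p q r 0 0 2] nerve_simplex_simp_actD(5)[OF tri, of p q r 0 2 2]
      by (auto simp: tri_def)
  next
    fix p q r s assume "p < q \<and> q < r \<and> r < s \<and> F_edge n k p s"
    then show "cocycle C (data_of u) p q r s"
      using nerve_simplex_simp_actD(6)[OF tetra, of p q r s 0 1 2 3] by (simp add: tetra_def)
  qed
qed

lemma lax_data_anti:
  assumes "k' \<le> k" and L: "lax_data C n k' G"
  shows "lax_data C n k G"
proof -
  note D = lax_dataD[OF L] and E = F_edge_anti[OF assms(1)]
  show ?thesis
    unfolding lax_data_def using D(1,3) D(2)[OF E] D(4)[OF _ _ E] D(5)[OF _ _ E] D(6)[OF _ _ _ E]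
    by simp
qed

context two_cat
begin

lemma lax_data_cocycle:
  assumes L: "lax_data C n k G" and "p \<le> q" "q \<le> r" "r \<le> s" and F: "F_edge n k p s"
  shows "cocycle C G p q r s"
proof -
  have F': "F_edge n k x y" if "p \<le> x" "x \<le> y" "y \<le> s" for x y
    using F_edge_subedge[OF F] that .
  have "s \<le> n" using F by (simp add: F_edge_def)
  note A = lax_data_Ar[OF L F'] and Z = lax_data_Ce[OF L _ _ F'] and N = lax_data_normal[OF L _ _ F']
  consider "p = q" | "q = r" | "r = s" | "p < q \<and> q < r \<and> r < s" using assms(2-4) by linarith
  then show ?thesis
  proof cases
    case 1
    then show ?thesis
      unfolding cocycle_def
      using assms(2-4) A[of r s] A[of p r] A[of p s] Z[of p r s] N[of p p r] N[of p p s] \<open>s \<le> n\<close>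
        lax_data_id1[OF L, of p]
      by (simp add: hcomp_id_right)
  next
    case 2
    then show ?thesis
      unfolding cocycle_def
      using assms(2-4) A[of q s] A[of p q] Z[of p q s] N[of p q q] N[of q q s] by simp
  next
    case 3
    then show ?thesis
      unfolding cocycle_def
      using assms(2-4) A[of q s] A[of p q] A[of p s] Z[of p q s] N[of p s s] N[of q s s] \<open>s \<le> n\<close>
        lax_data_id1[OF L, of s]
      by (simp add: hcomp_id_left)
  next
    case 4
    then show ?thesis using lax_data_cocycle_strict[OF L _ _ _ F] by blast
  qed
qed

lemma lax_data_nerve_simplex:
  assumes L: "lax_data C n k G" and F: "in_F n k (m, a)"
  shows "nerve_simplex C m (simp_act G m a)"
proof -
  have edge: "F_edge n k (a i) (a l)" if "i \<le> l" "l \<le> m" for i l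
    using in_F_F_edge[OF F] that .
  have mono: "a i \<le> a j" if "i \<le> j" "j \<le> m" for i j
    using in_F_mono[OF F] that .
  have bound: "a i \<le> n" if "i \<le> m" for i
    using in_F_bound[OF F] that .
  show ?thesis
    unfolding nerve_simplex_def sob_simp_act sar_simp_act sce_simp_act
  proof (intro conjI allI impI)
    fix i assume "i \<le> m"
    then show "(if i \<le> m then sob G (a i) else undefined) \<in> Ob C"
      and "(if i \<le> i \<and> i \<le> m then sar G (a i) (a i) else undefined) =
        i1 (if i \<le> m then sob G (a i) else undefined)"
      using lax_data_Ob[OF L bound] lax_data_id1[OF L bound] by simp_all
  next
    fix i j assume "i \<le> j \<and> j \<le> m"
    then show "(if i \<le> j \<and> j \<le> m then sar G (a j) (a i) else undefined) \<in> Ar C"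
      and "d1 (if i \<le> j \<and> j \<le> m then sar G (a j) (a i) else undefined) =
        (if i \<le> m then sob G (a i) else undefined)"
      and "c1 (if i \<le> j \<and> j \<le> m then sar G (a j) (a i) else undefined) =
        (if j \<le> m then sob G (a j) else undefined)"
      using lax_data_Ar[OF L edge[of i j]] by auto
  next
    fix i j l assume h: "i \<le> j \<and> j \<le> l \<and> l \<le> m"
    then show "(if i \<le> j \<and> j \<le> l \<and> l \<le> m then sce G (a l) (a j) (a i) else undefined) \<in> Ce C"
      and "sr (if i \<le> j \<and> j \<le> l \<and> l \<le> m then sce G (a l) (a j) (a i) else undefined) =
        (if i \<le> l \<and> l \<le> m then sar G (a l) (a i) else undefined)"
      and "tg (if i \<le> j \<and> j \<le> l \<and> l \<le> m then sce G (a l) (a j) (a i) else undefined) =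
        cp (if j \<le> l \<and> l \<le> m then sar G (a l) (a j) else undefined)
          (if i \<le> j \<and> j \<le> m then sar G (a j) (a i) else undefined)"
      using lax_data_Ce[OF L _ _ edge[of i l]] mono by auto
  next
    fix i j l assume "i \<le> j \<and> j \<le> l \<and> l \<le> m \<and> (i = j \<or> j = l)"
    then show "(if i \<le> j \<and> j \<le> l \<and> l \<le> m then sce G (a l) (a j) (a i) else undefined) =
        i2 (if i \<le> l \<and> l \<le> m then sar G (a l) (a i) else undefined)"
      using lax_data_normal[OF L _ _ edge[of i l]] mono by auto
  next
    fix i j k' l assume "i < j \<and> j < k' \<and> k' < l \<and> l \<le> m"
    moreover have "cocycle C G (a i) (a j) (a k') (a l)" if "i < j \<and> j < k' \<and> k' < l \<and> l \<le> m"
      using lax_data_cocycle[OF L _ _ _ edge[of i l]] mono that by auto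
    ultimately show "vc (hc (i2 (if k' \<le> l \<and> l \<le> m then sar G (a l) (a k') else undefined))
          (if i \<le> j \<and> j \<le> k' \<and> k' \<le> m then sce G (a k') (a j) (a i) else undefined))
        (if i \<le> k' \<and> k' \<le> l \<and> l \<le> m then sce G (a l) (a k') (a i) else undefined) =
      vc (hc (if j \<le> k' \<and> k' \<le> l \<and> l \<le> m then sce G (a l) (a k') (a j) else undefined)
          (i2 (if i \<le> j \<and> j \<le> m then sar G (a j) (a i) else undefined)))
        (if i \<le> j \<and> j \<le> l \<and> l \<le> m then sce G (a l) (a j) (a i) else undefined)"
      unfolding cocycle_def by auto
  qed auto
qed

lemma lax_data_induced_map_in_NK: "lax_data C n k G \<Longrightarrow> induced_map n k G \<in> NK C n k"
  by (rule induced_map_in_NK) (rule lax_data_nerve_simplex)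

end

section \<open>Filling in the edge \<open>(k-1, n)\<close>\<close>

locale filler = groupoidal_two_cat C for C :: "('o, 'a, 'c, 'z) twocat_scheme" +
  fixes n k p :: nat and G :: "('o, 'a, 'c) simp" and \<alpha> :: 'c
  assumes lax: "lax_data C n k G" and k_eq: "k = Suc p" and k_less: "k < n"
    and \<alpha>_in: "\<alpha> \<in> Ce C" and tgt_\<alpha>: "tg \<alpha> = cp (sar G n k) (sar G k p)"
begin

abbreviation "ob \<equiv> sob G"
abbreviation "ar \<equiv> sar G"
abbreviation "ce \<equiv> sce G"

lemma p_less_k: "p < k"
  using k_eq by simp

lemma F_edge_iff [simp]: "F_edge n k x y \<longleftrightarrow> x \<le> y \<and> y \<le> n \<and> (y < n \<or> k \<le> x)"
  by (simp add: F_edge_def)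

lemma ar_in_Ar [simp]: "F_edge n k x y \<Longrightarrow> ar y x \<in> Ar C"
  and dom1_ar [simp]: "F_edge n k x y \<Longrightarrow> d1 (ar y x) = ob x"
  and cod1_ar [simp]: "F_edge n k x y \<Longrightarrow> c1 (ar y x) = ob y"
  using lax_data_Ar[OF lax] by blast+

lemma ce_in_Ce [simp]: "x \<le> y \<Longrightarrow> y \<le> z \<Longrightarrow> F_edge n k x z \<Longrightarrow> ce z y x \<in> Ce C"
  and src_ce [simp]: "x \<le> y \<Longrightarrow> y \<le> z \<Longrightarrow> F_edge n k x z \<Longrightarrow> sr (ce z y x) = ar z x"
  and tgt_ce [simp]: "x \<le> y \<Longrightarrow> y \<le> z \<Longrightarrow> F_edge n k x z \<Longrightarrow> tg (ce z y x) = cp (ar z y) (ar y x)"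
  using lax_data_Ce[OF lax] by blast+

lemma ce_cocycle:
  "x \<le> y \<Longrightarrow> y \<le> z \<Longrightarrow> z \<le> w \<Longrightarrow> F_edge n k x w \<Longrightarrow>
   vc (hc (i2 (ar w z)) (ce z y x)) (ce w z x) = vc (hc (ce w z y) (i2 (ar y x))) (ce w y x)"
  using lax_data_cocycle[OF lax] unfolding cocycle_def by blast

lemma src_\<alpha>: "sr \<alpha> \<in> Ar C" "d1 (sr \<alpha>) = ob p" "c1 (sr \<alpha>) = ob n"
proof -
  show "sr \<alpha> \<in> Ar C" using \<alpha>_in by simp
  have "d1 (tg \<alpha>) = ob p" "c1 (tg \<alpha>) = ob n" using p_less_k k_less tgt_\<alpha> by auto
  then show "d1 (sr \<alpha>) = ob p" "c1 (sr \<alpha>) = ob n" using \<alpha>_in by simp_all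
qed

text \<open>For \<open>k < q < n\<close> the cocycle condition on \<open>(k-1, k, q, n)\<close> determines \<open>u\<^sub>n\<^sub>,\<^sub>q\<^sub>,\<^sub>k\<^sub>-\<^sub>1\<close>:
  \<open>solved_cell q\<close> is its solution, obtained by inverting the whiskering \<open>v\<^sub>n\<^sub>,\<^sub>q \<circ> v\<^sub>q\<^sub>,\<^sub>k\<^sub>,\<^sub>k\<^sub>-\<^sub>1\<close>.\<close>

definition solved_cell :: "nat \<Rightarrow> 'c" where
  "solved_cell q = vc (inv2 (hc (i2 (ar n q)) (ce q k p))) (vc (hc (ce n q k) (i2 (ar k p))) \<alpha>)"

definition new_cell :: "nat \<Rightarrow> 'c" where
  "new_cell q = (if q = k then \<alpha> else solved_cell q)"

lemma new_cell:
  assumes "k \<le> q" "q < n"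
  shows "new_cell q \<in> Ce C" "sr (new_cell q) = sr \<alpha>" "tg (new_cell q) = cp (ar n q) (ar q p)"
    "vc (hc (i2 (ar n q)) (ce q k p)) (new_cell q) = vc (hc (ce n q k) (i2 (ar k p))) \<alpha>"
proof -
  let ?g = "hc (i2 (ar n q)) (ce q k p)"
  let ?X = "vc (hc (ce n q k) (i2 (ar k p))) \<alpha>"
  have g: "?g \<in> Ce C" "sr ?g = cp (ar n q) (ar q p)" "tg ?g = cp (ar n q) (cp (ar q k) (ar k p))"
    using assms p_less_k k_less by auto
  have X: "?X \<in> Ce C" "sr ?X = sr \<alpha>" "tg ?X = cp (cp (ar n q) (ar q k)) (ar k p)"
    using assms p_less_k k_less \<alpha>_in tgt_\<alpha> by auto
  have "cp (ar n q) (cp (ar q k) (ar k p)) = cp (cp (ar n q) (ar q k)) (ar k p)"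
    using assms p_less_k k_less by (intro comp_assoc) auto
  then have solved: "solved_cell q \<in> Ce C" "sr (solved_cell q) = sr \<alpha>"
      "tg (solved_cell q) = cp (ar n q) (ar q p)" "vc ?g (solved_cell q) = ?X"
    unfolding solved_cell_def using g X by (auto intro: vcomp_inv2_cancel)
  have "ce k k p = i2 (ar k p)" "ce n k k = i2 (ar n k)"
    using lax_data_normal[OF lax, of p k k] lax_data_normal[OF lax, of k k n] p_less_k k_less by simp_all
  then show "new_cell q \<in> Ce C" "sr (new_cell q) = sr \<alpha>" "tg (new_cell q) = cp (ar n q) (ar q p)"
    "vc ?g (new_cell q) = ?X"
    unfolding new_cell_def using solved \<alpha>_in tgt_\<alpha> p_less_k k_less by auto
qed

text \<open>Both sides of the cocycle condition on \<open>(k-1, q, r, n)\<close>, whiskered by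
  \<open>u\<^sub>n\<^sub>,\<^sub>r \<circ> u\<^sub>r\<^sub>,\<^sub>q \<circ> u\<^sub>q\<^sub>,\<^sub>k\<^sub>,\<^sub>k\<^sub>-\<^sub>1\<close>, reduce to the same cell; cancelling this invertible
  whiskering gives the condition itself.\<close>

lemma new_cell_cocycle_left:
  assumes q: "k \<le> q" "q < r" "r < n"
  shows "vc (hc (i2 (ar n r)) (hc (i2 (ar r q)) (ce q k p))) (vc (hc (i2 (ar n r)) (ce r q p)) (new_cell r)) =
    vc (hc (vc (hc (ce n r q) (i2 (ar q k))) (ce n q k)) (i2 (ar k p))) \<alpha>"
proof -
  note pk = p_less_k and zr = new_cell[of r] and kr = order.trans[OF q(1) less_imp_le[OF q(2)]]
  let ?W1 = "hc (i2 (ar n r)) (hc (ce r q k) (i2 (ar k p)))"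
  let ?W2 = "hc (i2 (ar n r)) (ce r k p)"
  have assoc: "cp (ar r q) (cp (ar q k) (ar k p)) = cp (cp (ar r q) (ar q k)) (ar k p)"
    "cp (ar n r) (cp (ar r k) (ar k p)) = cp (cp (ar n r) (ar r k)) (ar k p)"
    "cp (ar n r) (cp (ar r q) (ar q p)) = cp (cp (ar n r) (ar r q)) (ar q p)"
    using q pk by (intro comp_assoc; auto)+
  have "vc (hc (i2 (ar n r)) (hc (i2 (ar r q)) (ce q k p))) (vc (hc (i2 (ar n r)) (ce r q p)) (new_cell r))
      = vc (hc (i2 (ar n r)) (vc (hc (i2 (ar r q)) (ce q k p)) (ce r q p))) (new_cell r)"
    using q pk kr zr assoc by (simp add: vcomp_assoc whisker_left_vcomp)
  also have "\<dots> = vc (hc (i2 (ar n r)) (vc (hc (ce r q k) (i2 (ar k p))) (ce r k p))) (new_cell r)"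
    using ce_cocycle[of p k q r] q pk by simp
  also have "\<dots> = vc (vc ?W1 ?W2) (new_cell r)"
    using q pk by (simp add: whisker_left_vcomp)
  also have "\<dots> = vc ?W1 (vc ?W2 (new_cell r))"
    using q pk kr zr assoc by (intro vcomp_assoc[symmetric]) auto
  also have "\<dots> = vc ?W1 (vc (hc (ce n r k) (i2 (ar k p))) \<alpha>)"
    using zr(4) kr q by simp
  also have "\<dots> = vc (hc (vc (hc (i2 (ar n r)) (ce r q k)) (ce n r k)) (i2 (ar k p))) \<alpha>"
    using q pk kr \<alpha>_in tgt_\<alpha> assoc
    by (simp add: vcomp_assoc whisker_left_right whisker_right_vcomp)
  also have "\<dots> = vc (hc (vc (hc (ce n r q) (i2 (ar q k))) (ce n q k)) (i2 (ar k p))) \<alpha>"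
    using ce_cocycle[of k q r n] q by simp
  finally show ?thesis .
qed

lemma new_cell_cocycle_right:
  assumes q: "k \<le> q" "q < r" "r < n"
  shows "vc (hc (i2 (ar n r)) (hc (i2 (ar r q)) (ce q k p))) (vc (hc (ce n r q) (i2 (ar q p))) (new_cell q)) =
    vc (hc (vc (hc (ce n r q) (i2 (ar q k))) (ce n q k)) (i2 (ar k p))) \<alpha>"
proof -
  note pk = p_less_k and zq = new_cell[of q]
  let ?z = "ce q k p"
  let ?P = "hc (ce n r q) (i2 (cp (ar q k) (ar k p)))"
  have assoc: "cp (ar n r) (cp (ar r q) (ar q p)) = cp (cp (ar n r) (ar r q)) (ar q p)"
    "cp (ar n q) (cp (ar q k) (ar k p)) = cp (cp (ar n q) (ar q k)) (ar k p)"
    using q pk by (intro comp_assoc; auto)+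
  have "vc (hc (i2 (ar n r)) (hc (i2 (ar r q)) ?z)) (vc (hc (ce n r q) (i2 (ar q p))) (new_cell q))
      = vc (vc (hc (i2 (cp (ar n r) (ar r q))) ?z) (hc (ce n r q) (i2 (ar q p)))) (new_cell q)"
    using q pk zq assoc by (simp add: vcomp_assoc whisker_left_whisker_left)
  also have "\<dots> = vc (vc ?P (hc (i2 (ar n q)) ?z)) (new_cell q)"
    using whisker_exchange[of ?z "ce n r q"] q pk by simp
  also have "\<dots> = vc ?P (vc (hc (i2 (ar n q)) ?z) (new_cell q))"
    using q pk zq by (intro vcomp_assoc[symmetric]) auto
  also have "\<dots> = vc ?P (vc (hc (ce n q k) (i2 (ar k p))) \<alpha>)"
    using zq(4) q by simp
  also have "\<dots> = vc (hc (vc (hc (ce n r q) (i2 (ar q k))) (ce n q k)) (i2 (ar k p))) \<alpha>"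
    using q pk \<alpha>_in tgt_\<alpha> assoc
    by (simp add: vcomp_assoc whisker_right_whisker_right[symmetric] whisker_right_vcomp)
  finally show ?thesis .
qed

lemma new_cell_cocycle:
  assumes q: "k \<le> q" "q < r" "r < n"
  shows "vc (hc (i2 (ar n r)) (ce r q p)) (new_cell r) = vc (hc (ce n r q) (i2 (ar q p))) (new_cell q)"
proof (rule vcomp_cancel_left)
  let ?g = "hc (i2 (ar n r)) (hc (i2 (ar r q)) (ce q k p))"
  note pk = p_less_k and zr = new_cell[of r] and zq = new_cell[of q]
  have "cp (ar n r) (cp (ar r q) (ar q p)) = cp (cp (ar n r) (ar r q)) (ar q p)"
    using q pk by (intro comp_assoc) auto
  then show "?g \<in> Ce C" "vc (hc (i2 (ar n r)) (ce r q p)) (new_cell r) \<in> Ce C"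
    "vc (hc (ce n r q) (i2 (ar q p))) (new_cell q) \<in> Ce C"
    "tg (vc (hc (i2 (ar n r)) (ce r q p)) (new_cell r)) = sr ?g"
    "tg (vc (hc (ce n r q) (i2 (ar q p))) (new_cell q)) = sr ?g"
    using q pk zr zq by auto
  show "vc ?g (vc (hc (i2 (ar n r)) (ce r q p)) (new_cell r)) =
      vc ?g (vc (hc (ce n r q) (i2 (ar q p))) (new_cell q))"
    using new_cell_cocycle_left[OF q] new_cell_cocycle_right[OF q] by simp
qed

end

context filler
begin

text \<open>Passing from \<open>F\<^sub>k\<Delta>\<^sup>n\<close> to \<open>F\<^sub>k\<^sub>-\<^sub>1\<Delta>\<^sup>n\<close> adds only the edge \<open>(k-1, n)\<close> and the
  triangles \<open>(k-1, q, n)\<close>; they receive \<open>s \<alpha>\<close> and \<open>new_cell q\<close> (identities when degenerate).\<close>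

definition filled_ar :: "nat \<Rightarrow> nat \<Rightarrow> 'a" where
  "filled_ar y x = (if x = p \<and> y = n then sr \<alpha> else ar y x)"

definition filled_ce :: "nat \<Rightarrow> nat \<Rightarrow> nat \<Rightarrow> 'c" where
  "filled_ce z y x =
    (if x = p \<and> z = n then (if y = p \<or> y = n then i2 (sr \<alpha>) else new_cell y) else ce z y x)"

definition filled :: "('o, 'a, 'c) simp" where
  "filled = (ob, filled_ar, filled_ce)"

lemma filled_sel [simp]: "sob filled = ob" "sar filled = filled_ar" "sce filled = filled_ce"
  by (simp_all add: filled_def sob_def sar_def sce_def)

lemma F_edge_old: "F_edge n p x y \<Longrightarrow> \<not> (x = p \<and> y = n) \<Longrightarrow> F_edge n k x y"
  using p_less_k k_eq by (auto simp: F_edge_def)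

lemma filled_cocycle:
  assumes "x < y" "y < z" "z < w" "F_edge n p x w"
  shows "cocycle C filled x y z w"
proof (cases "x = p \<and> w = n")
  case True
  then have "k \<le> y" using assms k_eq by simp
  moreover have "filled_ar n z = ar n z" "filled_ce z y p = ce z y p" "filled_ce n z p = new_cell z"
    "filled_ce n z y = ce n z y" "filled_ar y p = ar y p" "filled_ce n y p = new_cell y"
    using assms True p_less_k by (auto simp: filled_ar_def filled_ce_def)
  ultimately show ?thesis
    unfolding cocycle_def filled_sel using True new_cell_cocycle[of y z] assms by simp
next
  case False
  have old: "F_edge n k x w" using F_edge_old[of x w] assms False by auto
  then have "filled_ar w z = ar w z" "filled_ce z y x = ce z y x" "filled_ce w z x = ce w z x"
    "filled_ce w z y = ce w z y" "filled_ar y x = ar y x" "filled_ce w y x = ce w y x"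
    using assms False p_less_k by (auto simp: filled_ar_def filled_ce_def)
  then show ?thesis
    using lax_data_cocycle_strict[OF lax assms(1-3) old] unfolding cocycle_def filled_sel by simp
qed

lemma lax_data_filled: "lax_data C n p filled"
  unfolding lax_data_def filled_sel
proof (intro conjI; intro allI impI)
  fix x assume "x \<le> n" then show "ob x \<in> Ob C" using lax_data_Ob[OF lax] by blast
next
  fix x y assume "F_edge n p x y"
  then show "filled_ar y x \<in> Ar C \<and> d1 (filled_ar y x) = ob x \<and> c1 (filled_ar y x) = ob y"
    using F_edge_old[of x y] src_\<alpha> by (cases "x = p \<and> y = n") (auto simp: filled_ar_def)
next
  fix x assume "x \<le> n"
  then show "filled_ar x x = i1 (ob x)"
    using lax_data_id1[OF lax] p_less_k k_less by (auto simp: filled_ar_def)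
next
  fix x y z assume h: "x \<le> y \<and> y \<le> z \<and> F_edge n p x z"
  show "filled_ce z y x \<in> Ce C \<and> sr (filled_ce z y x) = filled_ar z x \<and>
      tg (filled_ce z y x) = cp (filled_ar z y) (filled_ar y x)"
  proof (cases "x = p \<and> z = n")
    case True
    have "ar p p = i1 (ob p)" "ar n n = i1 (ob n)"
      using lax_data_id1[OF lax] p_less_k k_less by simp_all
    moreover consider "y = p" | "y = n" | "k \<le> y \<and> y < n"
      using h True p_less_k k_eq by linarith
    ultimately show ?thesis
      using True src_\<alpha> new_cell[of y] p_less_k k_less by cases (auto simp: filled_ce_def filled_ar_def)
  next
    case False
    then have "F_edge n k x z" using F_edge_old[of x z] h by blast
    then show ?thesis using False h p_less_k by (auto simp: filled_ce_def filled_ar_def)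
  qed
next
  fix x y z assume "x \<le> y \<and> y \<le> z \<and> F_edge n p x z \<and> (x = y \<or> y = z)"
  then show "filled_ce z y x = i2 (filled_ar z x)"
    using F_edge_old[of x z] lax_data_normal[OF lax, of x y z]
    by (cases "x = p \<and> z = n") (auto simp: filled_ce_def filled_ar_def)
next
  fix x y z w assume "x < y \<and> y < z \<and> z < w \<and> F_edge n p x w"
  then show "cocycle C filled x y z w" using filled_cocycle by blast
qed

lemma agree_on_filled: "agree_on n k G filled"
  using p_less_k by (auto simp: agree_on_def filled_ar_def filled_ce_def)

lemma filled_cell: "sce filled n k p = \<alpha>"
  using p_less_k k_less by (simp add: filled_ce_def new_cell_def)

end

section \<open>The pullback square\<close>

lemma phi_induced_map:
  "k = Suc p \<Longrightarrow> k < n \<Longrightarrow> phi C n k (induced_map n k G) = comp C (sar G n k) (sar G k p)"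
  unfolding phi_def by (simp add: u_ar_induced_map F_edge_def)

lemma in_F_pred_tri: "k = Suc p \<Longrightarrow> k < n \<Longrightarrow> in_F n p (tri p k n)"
  by (intro in_F_tri) (auto simp: F_edge_def)

context groupoidal_two_cat
begin

lemma agree_on_new_cell:
  assumes L: "lax_data C n p G" and L': "lax_data C n p G'" and agree: "agree_on n k G G'"
    and k: "k = Suc p" "k < y" "y < n" and cell: "sce G n k p = sce G' n k p"
  shows "sce G n y p = sce G' n y p"
proof (rule vcomp_cancel_left)
  let ?g = "hc (i2 (sar G n y)) (sce G y k p)"
  have old: "F_edge n k y n" "F_edge n k p k" "F_edge n k k n" "F_edge n k p y"
    and new: "F_edge n p y n" "F_edge n p p y" "F_edge n p p n"
    using k by (auto simp: F_edge_def)
  have same: "sar G n y = sar G' n y" "sce G y k p = sce G' y k p" "sce G n y k = sce G' n y k"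
    "sar G k p = sar G' k p" "sar G y p = sar G' y p"
    using agree old k unfolding agree_on_def by auto
  show "?g \<in> Ce C" "sce G n y p \<in> Ce C" "sce G' n y p \<in> Ce C"
    "tg (sce G n y p) = sr ?g" "tg (sce G' n y p) = sr ?g"
    using lax_data_Ar[OF L new(1)] lax_data_Ar[OF L new(2)] lax_data_Ce[OF L, of p k y]
      lax_data_Ce[OF L, of p y n] lax_data_Ce[OF L', of p y n] new k same by auto
  show "vc ?g (sce G n y p) = vc ?g (sce G' n y p)"
    using lax_data_cocycle[OF L, of p k y n] lax_data_cocycle[OF L', of p k y n] new k same cell
    unfolding cocycle_def by simp
qed

lemma agree_on_extend:
  assumes L: "lax_data C n p G" and L': "lax_data C n p G'" and agree: "agree_on n k G G'"
    and k: "k = Suc p" "k < n" and cell: "sce G n k p = sce G' n k p"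
  shows "agree_on n p G G'"
proof -
  have old: "F_edge n k x y" if "F_edge n p x y" "\<not> (x = p \<and> y = n)" for x y
    using that k by (auto simp: F_edge_def)
  have ar_np: "sar G n p = sar G' n p"
    using lax_data_Ce[OF L, of p k n] lax_data_Ce[OF L', of p k n] cell k by (auto simp: F_edge_def)
  have ce_nyp: "sce G n y p = sce G' n y p" if y: "p \<le> y" "y \<le> n" for y
  proof -
    consider "y = p \<or> y = n" | "y = k" | "k < y \<and> y < n" using y k by linarith
    then show ?thesis
    proof cases
      case 1
      then show ?thesis
        using lax_data_normal[OF L, of p y n] lax_data_normal[OF L', of p y n] y ar_np
        by (auto simp: F_edge_def)
    qed (use cell agree_on_new_cell[OF L L' agree k(1)] in auto)
  qed
  show ?thesis
    using agree old ar_np ce_nyp unfolding agree_on_def by (metis F_edge_def)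
qed

end

lemma NK_pred_restr_cell:
  assumes u: "u \<in> NK C n p" and k: "k = Suc p" "k < n"
  shows "restr n k u = induced_map n k (data_of u)" and "u_ce u n k p = sce (data_of u) n k p"
proof -
  have "u = induced_map n p (data_of u)" using NK_eq_induced_map[OF u] .
  then show "restr n k u = induced_map n k (data_of u)" "u_ce u n k p = sce (data_of u) n k p"
    using restr_induced_map[of p k n] u_ce_induced_map[OF in_F_pred_tri[OF k]] k by (metis le_SucI order.refl)+
qed

lemma (in two_cat) restr_cell_in_fibre:
  assumes u: "u \<in> NK C n p" and k: "k = Suc p" "k < n"
  shows "restr n k u \<in> NK C n k \<and> u_ce u n k p \<in> Ce C \<and> phi C n k (restr n k u) = tg (u_ce u n k p)"
proof -
  let ?G = "data_of u"
  have L: "lax_data C n p ?G" using NK_lax_data[OF u] k by simp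
  then have "lax_data C n k ?G" using lax_data_anti[OF _ L, of k] k by simp
  then have "induced_map n k ?G \<in> NK C n k" by (rule lax_data_induced_map_in_NK)
  moreover have "sce ?G n k p \<in> Ce C" "tg (sce ?G n k p) = cp (sar ?G n k) (sar ?G k p)"
    using lax_data_Ce[OF L, of p k n] k by (auto simp: F_edge_def)
  ultimately show ?thesis
    using NK_pred_restr_cell[OF u k] phi_induced_map[OF k] by simp
qed

context groupoidal_two_cat
begin

lemma restr_cell_inj_on:
  assumes k: "k = Suc p" "k < n"
  shows "inj_on (\<lambda>u. (restr n k u, u_ce u n k p)) (NK C n p)"
proof (rule inj_onI)
  fix u u' assume u: "u \<in> NK C n p" and u': "u' \<in> NK C n p"
    and eq: "(restr n k u, u_ce u n k p) = (restr n k u', u_ce u' n k p)"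
  have "agree_on n k (data_of u) (data_of u')"
    using eq NK_pred_restr_cell(1)[OF u k] NK_pred_restr_cell(1)[OF u' k] k
    by (intro agree_on_if_induced_map_eq) auto
  moreover have "sce (data_of u) n k p = sce (data_of u') n k p"
    using eq NK_pred_restr_cell(2)[OF u k] NK_pred_restr_cell(2)[OF u' k] by simp
  moreover have "lax_data C n p (data_of u)" "lax_data C n p (data_of u')"
    using NK_lax_data[OF u] NK_lax_data[OF u'] k by simp_all
  ultimately have "agree_on n p (data_of u) (data_of u')"
    using agree_on_extend k by blast
  then show "u = u'"
    using NK_eq_induced_map[OF u] NK_eq_induced_map[OF u'] induced_map_cong by metis
qed

lemma fibre_subset_restr_cell_image:
  assumes k: "k = Suc p" "k < n" and v: "v \<in> NK C n k" and \<alpha>: "\<alpha> \<in> Ce C" "phi C n k v = tg \<alpha>"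
  shows "(v, \<alpha>) \<in> (\<lambda>u. (restr n k u, u_ce u n k p)) ` NK C n p"
proof -
  let ?G = "data_of v"
  have v_eq: "v = induced_map n k ?G" using NK_eq_induced_map[OF v] .
  interpret filler C n k p ?G \<alpha>
    using two_category invertible NK_lax_data[OF v] k \<alpha> phi_induced_map[OF k, where C = C and G = ?G] v_eq
    by unfold_locales auto
  let ?u = "induced_map n p filled"
  have "restr n k ?u = induced_map n k filled"
    using restr_induced_map[of p k] k by simp
  also have "\<dots> = v"
    using induced_map_cong[OF agree_on_filled] v_eq by simp
  finally have "restr n k ?u = v" .
  moreover have "u_ce ?u n k p = \<alpha>"
    using u_ce_induced_map[OF in_F_pred_tri[OF k], of filled] filled_cell by simp
  moreover have "?u \<in> NK C n p"
    using lax_data_filled by (rule lax_data_induced_map_in_NK)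
  ultimately show ?thesis by force
qed

end

theorem mainTheorem6:
  fixes C :: "('o, 'a, 'c, 'z) twocat_scheme" and n k :: nat
  assumes "two_category C"
    and "all_2cells_invertible C"
    and "2 \<le> n" and "1 \<le> k" and "k \<le> n - 1"
  shows "bij_betw (\<lambda>u. (restr n k u, u_ce u n k (k - 1)))
           (NK C n (k - 1))
           {(v, \<alpha>). v \<in> NK C n k \<and> \<alpha> \<in> Ce C \<and> phi C n k v = tgt C \<alpha>}"
proof -
  interpret groupoidal_two_cat C
    using assms(1,2) by unfold_locales
  define p where "p = k - 1"
  have k: "k = Suc p" "k < n"
    using assms(3-5) p_def by auto
  show ?thesis
    unfolding p_def[symmetric] bij_betw_def
  proof
    show "inj_on (\<lambda>u. (restr n k u, u_ce u n k p)) (NK C n p)"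
      using restr_cell_inj_on[OF k] .
    show "(\<lambda>u. (restr n k u, u_ce u n k p)) ` NK C n p =
        {(v, \<alpha>). v \<in> NK C n k \<and> \<alpha> \<in> Ce C \<and> phi C n k v = tgt C \<alpha>}"
      using restr_cell_in_fibre[OF _ k] fibre_subset_restr_cell_image[OF k] by auto
  qed
qed

end
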